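(* Let $L_1,\dots,L_n$ be directed lines in $\mathbb{R}^3$ such that no two of them are coplanar, and suppose $d(L_i,L_j)=1$ for all $1\le i<j\le n$, where $d(L,L')=\min_{x\in L,\,y\in L'}\|x-y\|$. Then there do not exist five distinct indices $i_1,\dots,i_5\in\{1,\dots,n\}$ such that the chiralities $\varepsilon(L_{i_a},L_{i_b})$, $1\le a<b\le 5$, are all equal (i.e. all $+1$ or all $-1$). Equivalently, the chirality graph of $\{L_1,\dots,L_n\}$ contains no monochromatic $K_5$.
   Context: A directed line in $\mathbb{R}^3$ is a set $L=\mathbb{R}v+w$ with a chosen unit vector $v\in\mathbb{R}^3$ (its direction) and some $w\in\mathbb{R}^3$ (determined modulo $\mathbb{R}v$). For two directed lines $L=\mathbb{R}v+w$, $L'=\mathbb{R}v'+w'$ that are not coplanar (i.e. skew), their chirality is $\varepsilon(L,L')=\operatorname{sgn}\langle v\times v',\,w-w'\rangle\in\{\pm1\}$, where $\langle\cdot,\cdot\rangle$ is the standard inner product and $\times$ the cross product; this is independent of the choices of $w,w'$ and symmetric in $L,L'$. The chirality graph of $\{L_1,\dots,L_n\}$ (pairwise non-coplanar directed lines) is the complete graph on $\{1,\dots,n\}$ with edge $\{i,j\}$ labelled by the sign $\varepsilon(L_i,L_j)$; a monochromatic $K_5$ is a set of 5 vertices all of whose 10 edges carry the same sign. *)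

theory Defs
  imports "HOL-Analysis.Analysis" "HOL-Analysis.Cross3"
begin

text \<open>A directed line is represented by a pair (v, w) of a direction v (required to be a unit
vector) and a base point w; the underlying point set is {w + t v | t real}.\<close>

type_synonym dline = "(real^3) \<times> (real^3)"

definition is_dline :: "dline \<Rightarrow> bool" where
  "is_dline L \<longleftrightarrow> norm (fst L) = 1"

definition line_points :: "dline \<Rightarrow> (real^3) set" where
  "line_points L = {snd L + t *\<^sub>R fst L | t. True}"

definition coplanar_lines :: "dline \<Rightarrow> dline \<Rightarrow> bool" where
  "coplanar_lines L L' \<longleftrightarrow>
     (\<exists>nv :: real^3. \<exists>c. nv \<noteq> 0 \<and> (\<forall>x \<in> line_points L \<union> line_points L'. nv \<bullet> x = c))"

definition line_dist :: "dline \<Rightarrow> dline \<Rightarrow> real" where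
  "line_dist L L' = Inf {norm (x - y) | x y. x \<in> line_points L \<and> y \<in> line_points L'}"

definition chirality :: "dline \<Rightarrow> dline \<Rightarrow> real" where
  "chirality L L' = sgn ((cross3 (fst L) (fst L')) \<bullet> (snd L - snd L'))"

end

theory Submission
  imports Defs
begin

text \<open>
  For skew lines \<open>w + \<real>v\<close>, \<open>w' + \<real>v'\<close> at distance 1 the moment \<open>(v \<times> v') \<bullet> (w - w')\<close>
  equals the chirality times \<open>\<parallel>v \<times> v'\<parallel>\<close>. If the directions of some lines satisfy a linear
  relation \<open>\<Sum> k\<^sub>i v\<^sub>i = 0\<close>, then \<open>\<Sum>\<^sub>i\<^sub>,\<^sub>j k\<^sub>i k\<^sub>j (v\<^sub>i \<times> v\<^sub>j) \<bullet> (w\<^sub>i - w\<^sub>j) = 0\<close>, because this sum is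
  twice \<open>\<Sum>\<^sub>i k\<^sub>i (w\<^sub>i \<times> v\<^sub>i) \<bullet> \<Sum>\<^sub>j k\<^sub>j v\<^sub>j\<close>; in a monochromatic family it therefore reads
  \<open>\<Sum>\<^sub>i\<^sub>,\<^sub>j k\<^sub>i k\<^sub>j \<parallel>v\<^sub>i \<times> v\<^sub>j\<parallel> = 0\<close>. This fails for three dependent directions (the three terms have
  equal absolute value) and, by a triangle inequality for cross products, for four directions
  whose Cramer relation has coefficients with positive product. Hence in a monochromatic family
  all triple products of directions are nonzero and, for any four lines, the product of their
  four triple products is \<open>\<le> 0\<close>. Among five lines the product of these five quantities is a
  nonzero square, a contradiction.
\<close>

section \<open>Cross products in three-space\<close>

definition det3 :: "real^3 \<Rightarrow> real^3 \<Rightarrow> real^3 \<Rightarrow> real" where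
  "det3 a b c = cross3 a b \<bullet> c"

lemma det3_cramer_relation:
  "det3 b c d *\<^sub>R a - det3 a c d *\<^sub>R b + det3 a b d *\<^sub>R c - det3 a b c *\<^sub>R d = 0"
  unfolding det3_def by (simp add: cross3_simps forall_3)

lemma norm_cross_commute: "norm (cross3 y x) = norm (cross3 x y)"
  by (metis cross_skew norm_minus_cancel)

lemma norm_cross_scaleR:
  "norm (cross3 (a *\<^sub>R x) (b *\<^sub>R y)) = \<bar>a\<bar> * \<bar>b\<bar> * norm (cross3 x y)"
  by (simp add: cross_mult_left cross_mult_right abs_mult)

lemma norm_add_eq_imp_nonneg_multiple:
  fixes p q :: "'a::real_inner"
  assumes "norm (p + q) = norm p + norm q" and "p \<noteq> 0"
  shows "\<exists>c\<ge>0. q = c *\<^sub>R p"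
proof -
  have eq: "norm p *\<^sub>R q = norm q *\<^sub>R p" using assms(1) norm_triangle_eq by blast
  have "q = inverse (norm p) *\<^sub>R (norm p *\<^sub>R q)" using assms(2) by simp
  also have "\<dots> = (norm q / norm p) *\<^sub>R p" unfolding eq by (simp add: divide_inverse_commute)
  finally have "q = (norm q / norm p) *\<^sub>R p" .
  then show ?thesis by (intro exI[of _ "norm q / norm p"]) auto
qed

lemma norm_cross_sum_less:
  fixes x1 x2 x3 x4 :: "real^3"
  assumes sum: "x1 + x2 = x3 + x4" and "cross3 x1 x3 \<noteq> 0" and "cross3 x2 x3 \<noteq> 0"
  shows "norm (cross3 x1 x2) + norm (cross3 x3 x4) <
    norm (cross3 x1 x3) + norm (cross3 x1 x4) + norm (cross3 x2 x3) + norm (cross3 x2 x4)"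
proof -
  have x2: "x2 = x3 + x4 - x1" using sum by (simp add: algebra_simps)
  have split1: "cross3 x1 x2 = cross3 x1 x3 + cross3 x1 x4"
    and split2: "- cross3 x1 x2 = cross3 x2 x3 + cross3 x2 x4"
    and split3: "cross3 x3 x4 = cross3 x3 x1 + cross3 x3 x2"
    and split4: "- cross3 x3 x4 = cross3 x4 x1 + cross3 x4 x2"
    by (simp_all add: x2 cross3_simps)
  have le1: "norm (cross3 x1 x2) \<le> norm (cross3 x1 x3) + norm (cross3 x1 x4)"
    unfolding split1 by (rule norm_triangle_ineq)
  have le2: "norm (cross3 x1 x2) \<le> norm (cross3 x2 x3) + norm (cross3 x2 x4)"
    using norm_triangle_ineq[of "cross3 x2 x3" "cross3 x2 x4"] by (simp flip: split2)
  have le3: "norm (cross3 x3 x4) \<le> norm (cross3 x1 x3) + norm (cross3 x2 x3)"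
    using norm_triangle_ineq[of "cross3 x3 x1" "cross3 x3 x2"]
    by (simp add: norm_cross_commute[of x3 x1] norm_cross_commute[of x3 x2] flip: split3)
  have le4: "norm (cross3 x3 x4) \<le> norm (cross3 x1 x4) + norm (cross3 x2 x4)"
    using norm_triangle_ineq[of "cross3 x4 x1" "cross3 x4 x2"]
    by (simp add: norm_cross_commute[of x4 x1] norm_cross_commute[of x4 x2] flip: split4)
  show ?thesis
  proof (rule ccontr)
    assume "\<not> ?thesis"
    \<comment> \<open>then three triangle inequalities are equalities, so \<open>x1 \<times> x4\<close>, \<open>x3 \<times> x2\<close> and \<open>x2 \<times> x4\<close> are
      nonnegative multiples of \<open>\<plusminus>x1 \<times> x3\<close>, and the identity relating them forces \<open>x1 \<times> x3 = 0\<close>\<close>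
    then have "norm (cross3 x1 x2) = norm (cross3 x1 x3) + norm (cross3 x1 x4)"
      and "norm (cross3 x1 x2) = norm (cross3 x2 x3) + norm (cross3 x2 x4)"
      and "norm (cross3 x3 x4) = norm (cross3 x1 x3) + norm (cross3 x2 x3)"
      using le1 le2 le3 le4 by linarith+
    then have eq1: "norm (cross3 x1 x3 + cross3 x1 x4) = norm (cross3 x1 x3) + norm (cross3 x1 x4)"
      and eq2: "norm (cross3 x2 x3 + cross3 x2 x4) = norm (cross3 x2 x3) + norm (cross3 x2 x4)"
      and eq3: "norm (cross3 x3 x1 + cross3 x3 x2) = norm (cross3 x3 x1) + norm (cross3 x3 x2)"
      by (simp_all add: norm_cross_commute[of x3 x1] norm_cross_commute[of x3 x2]
          flip: split1 split2 split3)
    define n where "n = cross3 x1 x3"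
    have "n \<noteq> 0" using assms(2) unfolding n_def .
    have "cross3 x3 x1 = - n" unfolding n_def by (rule cross_skew)
    obtain c where "c \<ge> 0" and c: "cross3 x1 x4 = c *\<^sub>R n"
      using norm_add_eq_imp_nonneg_multiple[OF eq1] assms(2) unfolding n_def by blast
    obtain d where "d \<ge> 0" and d: "cross3 x3 x2 = - d *\<^sub>R n"
      using norm_add_eq_imp_nonneg_multiple[OF eq3] \<open>n \<noteq> 0\<close> \<open>cross3 x3 x1 = - n\<close> by auto
    obtain e where "e \<ge> 0" and e: "cross3 x2 x4 = e *\<^sub>R cross3 x2 x3"
      using norm_add_eq_imp_nonneg_multiple[OF eq2] assms(3) by blast
    have "cross3 x2 x4 = cross3 x3 x2 - n - cross3 x1 x4"
      unfolding n_def by (simp add: x2 cross3_simps)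
    moreover have "cross3 x2 x3 = d *\<^sub>R n" using d by (metis cross_skew minus_minus scaleR_minus_left)
    ultimately have "n + c *\<^sub>R n + d *\<^sub>R n + (e * d) *\<^sub>R n = 0" using c d e by simp
    then have "(1 + c + d + e * d) *\<^sub>R n = 0" by (simp add: algebra_simps)
    moreover have "1 + c + d + e * d > 0"
      using \<open>c \<ge> 0\<close> \<open>d \<ge> 0\<close> \<open>e \<ge> 0\<close> by (simp add: add_pos_nonneg)
    ultimately show False using \<open>n \<noteq> 0\<close> by simp
  qed
qed

lemma cross3_of_sum_zero:
  fixes x y z :: "real^3"
  assumes "x + y + z = 0"
  shows "cross3 x z = cross3 y x" and "cross3 y z = cross3 x y"
proof -
  have z: "z = - x - y" using assms by (simp add: algebra_simps eq_neg_iff_add_eq_0)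
  show "cross3 x z = cross3 y x" and "cross3 y z = cross3 x y"
    unfolding z by (simp_all add: cross3_simps)
qed

section \<open>Weighted sums of cross-product norms\<close>

definition cross_form :: "('a \<Rightarrow> real) \<Rightarrow> ('a \<Rightarrow> real^3) \<Rightarrow> 'a set \<Rightarrow> real" where
  "cross_form k V I = (\<Sum>i\<in>I. \<Sum>j\<in>I. k i * k j * norm (cross3 (V i) (V j)))"

lemma cross_form_empty [simp]: "cross_form k V {} = 0"
  by (simp add: cross_form_def)

lemma cross_form_insert:
  assumes "finite I" and "a \<notin> I"
  shows "cross_form k V (insert a I) = cross_form k V I + 2 * k a * (\<Sum>j\<in>I. k j * norm (cross3 (V a) (V j)))"
  using assms by (simp add: cross_form_def sum.distrib sum_distrib_left norm_cross_commute[of _ "V a"] algebra_simps)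

lemma cross_form_three:
  assumes "distinct [a, b, c]"
  shows "cross_form k V {a, b, c} = 2 * (k a * k b * norm (cross3 (V a) (V b))
    + k a * k c * norm (cross3 (V a) (V c)) + k b * k c * norm (cross3 (V b) (V c)))"
  using assms by (simp add: cross_form_insert algebra_simps)

lemma cross_form_four:
  assumes "distinct [a, b, c, d]"
  shows "cross_form k V {a, b, c, d} = 2 * (k a * k b * norm (cross3 (V a) (V b))
    + k a * k c * norm (cross3 (V a) (V c)) + k a * k d * norm (cross3 (V a) (V d))
    + k b * k c * norm (cross3 (V b) (V c)) + k b * k d * norm (cross3 (V b) (V d))
    + k c * k d * norm (cross3 (V c) (V d)))"
  using assms by (simp add: cross_form_insert algebra_simps)

lemma cross_form_uminus: "cross_form (\<lambda>i. - k i) V I = cross_form k V I"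
  by (simp add: cross_form_def)

lemma cross_form_three_nonzero:
  assumes "distinct [a, b, c]" and dep: "(\<Sum>i\<in>{a, b, c}. k i *\<^sub>R V i) = 0" and "k c \<noteq> 0"
    and ab: "cross3 (V a) (V b) \<noteq> 0" and ac: "cross3 (V a) (V c) \<noteq> 0" and bc: "cross3 (V b) (V c) \<noteq> 0"
  shows "cross_form k V {a, b, c} \<noteq> 0"
proof -
  have sum: "k a *\<^sub>R V a + k b *\<^sub>R V b + k c *\<^sub>R V c = 0"
    using dep assms(1) by (simp add: add.assoc)
  from cross3_of_sum_zero[OF sum]
  have "norm (cross3 (k a *\<^sub>R V a) (k c *\<^sub>R V c)) = norm (cross3 (k a *\<^sub>R V a) (k b *\<^sub>R V b))"
    and "norm (cross3 (k b *\<^sub>R V b) (k c *\<^sub>R V c)) = norm (cross3 (k a *\<^sub>R V a) (k b *\<^sub>R V b))"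
    by (simp_all add: norm_cross_commute[of "k b *\<^sub>R V b"])
  then have eq_ac: "\<bar>k a * k c * norm (cross3 (V a) (V c))\<bar> = \<bar>k a * k b * norm (cross3 (V a) (V b))\<bar>"
    and eq_bc: "\<bar>k b * k c * norm (cross3 (V b) (V c))\<bar> = \<bar>k a * k b * norm (cross3 (V a) (V b))\<bar>"
    by (simp_all add: norm_cross_scaleR abs_mult)
  have "k a \<noteq> 0 \<or> k b \<noteq> 0"
  proof (rule ccontr)
    assume "\<not> (k a \<noteq> 0 \<or> k b \<noteq> 0)"
    then have "V c = 0" using sum \<open>k c \<noteq> 0\<close> by simp
    then show False using ac by simp
  qed
  then have "\<bar>k a * k b * norm (cross3 (V a) (V b))\<bar> \<noteq> 0"
    using eq_ac eq_bc \<open>k c \<noteq> 0\<close> ac bc by (auto simp flip: eq_ac)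
  \<comment> \<open>three reals of equal nonzero absolute value cannot sum to zero\<close>
  with eq_ac eq_bc have "k a * k b * norm (cross3 (V a) (V b)) + k a * k c * norm (cross3 (V a) (V c))
      + k b * k c * norm (cross3 (V b) (V c)) \<noteq> 0"
    by arith
  then show ?thesis by (simp add: cross_form_three[OF assms(1)])
qed

lemma cross_form_neg_if_split:
  assumes "distinct [a, b, c, d]" and dep: "(\<Sum>i\<in>{a, b, c, d}. k i *\<^sub>R V i) = 0"
    and "k a > 0" "k b > 0" "k c < 0" "k d < 0"
    and "cross3 (V a) (V c) \<noteq> 0" "cross3 (V b) (V c) \<noteq> 0"
  shows "cross_form k V {a, b, c, d} < 0"
proof -
  have "k a *\<^sub>R V a + (k b *\<^sub>R V b + (k c *\<^sub>R V c + k d *\<^sub>R V d)) = 0"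
    using dep assms(1) by simp
  then have "k a *\<^sub>R V a + k b *\<^sub>R V b = - (k c *\<^sub>R V c + k d *\<^sub>R V d)"
    by (metis add.assoc eq_neg_iff_add_eq_0)
  then have "k a *\<^sub>R V a + k b *\<^sub>R V b = (- k c) *\<^sub>R V c + (- k d) *\<^sub>R V d"
    by simp
  moreover have "cross3 (k a *\<^sub>R V a) ((- k c) *\<^sub>R V c) \<noteq> 0"
    and "cross3 (k b *\<^sub>R V b) ((- k c) *\<^sub>R V c) \<noteq> 0"
    using assms(3-8) by (simp_all add: cross_mult_left cross_mult_right)
  ultimately have "norm (cross3 (k a *\<^sub>R V a) (k b *\<^sub>R V b)) + norm (cross3 ((- k c) *\<^sub>R V c) ((- k d) *\<^sub>R V d)) <
    norm (cross3 (k a *\<^sub>R V a) ((- k c) *\<^sub>R V c)) + norm (cross3 (k a *\<^sub>R V a) ((- k d) *\<^sub>R V d)) +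
    norm (cross3 (k b *\<^sub>R V b) ((- k c) *\<^sub>R V c)) + norm (cross3 (k b *\<^sub>R V b) ((- k d) *\<^sub>R V d))"
    by (rule norm_cross_sum_less)
  then have "k a * k b * norm (cross3 (V a) (V b)) + k c * k d * norm (cross3 (V c) (V d)) <
    - (k a * k c * norm (cross3 (V a) (V c)) + k a * k d * norm (cross3 (V a) (V d))
      + k b * k c * norm (cross3 (V b) (V c)) + k b * k d * norm (cross3 (V b) (V d)))"
    using assms(3-6) by (simp add: norm_cross_scaleR)
  then show ?thesis unfolding cross_form_four[OF assms(1)] by (simp add: algebra_simps)
qed

lemma cross_form_four_nonzero:
  assumes "distinct [a, b, c, d]" and dep: "(\<Sum>i\<in>{a, b, c, d}. k i *\<^sub>R V i) = 0"
    and prod: "k a * k b * k c * k d > 0"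
    and nz: "\<forall>x\<in>{a, b, c, d}. \<forall>y\<in>{a, b, c, d}. x \<noteq> y \<longrightarrow> cross3 (V x) (V y) \<noteq> 0"
  shows "cross_form k V {a, b, c, d} \<noteq> 0"
proof -
  have nz_ab: "cross3 (V a) (V b) \<noteq> 0" and nz_ac: "cross3 (V a) (V c) \<noteq> 0"
    and nz_ad: "cross3 (V a) (V d) \<noteq> 0" and nz_bc: "cross3 (V b) (V c) \<noteq> 0"
    and nz_bd: "cross3 (V b) (V d) \<noteq> 0" and nz_cd: "cross3 (V c) (V d) \<noteq> 0"
    and nz_cb: "cross3 (V c) (V b) \<noteq> 0" and nz_db: "cross3 (V d) (V b) \<noteq> 0"
    using nz assms(1) by auto
  have *: "cross_form k V {a, b, c, d} \<noteq> 0"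
    if dep: "(\<Sum>i\<in>{a, b, c, d}. k i *\<^sub>R V i) = 0" and "k b * k c * k d > 0" "k a > 0" for k
  proof -
    consider "k b > 0" "k c > 0" "k d > 0" | "k b > 0" "k c < 0" "k d < 0"
      | "k c > 0" "k b < 0" "k d < 0" | "k d > 0" "k b < 0" "k c < 0"
      using \<open>k b * k c * k d > 0\<close>
      by (cases "k b > 0"; cases "k c > 0"; cases "k d > 0") (auto simp: zero_less_mult_iff mult_less_0_iff)
    then show ?thesis
    proof cases
      case 1
      with \<open>k a > 0\<close> nz_ab nz_ac nz_ad nz_bc nz_bd nz_cd have "cross_form k V {a, b, c, d} > 0"
        unfolding cross_form_four[OF assms(1)] by (simp add: add_pos_pos)
      then show ?thesis by simp
    next
      case 2
      have "cross_form k V {a, b, c, d} < 0"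
        using assms(1) dep \<open>k a > 0\<close> 2 nz_ac nz_bc by (rule cross_form_neg_if_split)
      then show ?thesis by simp
    next
      case 3
      have "{a, c, b, d} = {a, b, c, d}" and "distinct [a, c, b, d]" using assms(1) by auto
      with cross_form_neg_if_split[of a c b d k V]
      have "cross_form k V {a, b, c, d} < 0" using dep \<open>k a > 0\<close> 3 nz_ab nz_cb by simp
      then show ?thesis by simp
    next
      case 4
      have "{a, d, b, c} = {a, b, c, d}" and "distinct [a, d, b, c]" using assms(1) by auto
      with cross_form_neg_if_split[of a d b c k V]
      have "cross_form k V {a, b, c, d} < 0" using dep \<open>k a > 0\<close> 4 nz_ab nz_db by simp
      then show ?thesis by simp
    qed
  qed
  have "k a * (k b * k c * k d) > 0" using prod by (simp add: mult.assoc)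
  then consider "k a > 0" "k b * k c * k d > 0" | "- k a > 0" "(- k b) * (- k c) * (- k d) > 0"
    by (auto simp: zero_less_mult_iff)
  then show ?thesis
  proof cases
    case 1
    then show ?thesis using *[OF dep] by blast
  next
    case 2
    moreover have "(\<Sum>i\<in>{a, b, c, d}. - k i *\<^sub>R V i) = 0" using dep by (simp add: sum_negf)
    ultimately show ?thesis using *[of "\<lambda>i. - k i"] by (simp add: cross_form_uminus)
  qed
qed

section \<open>Moments of skew lines\<close>

lemma plucker_relation:
  fixes V W :: "'a \<Rightarrow> real^3"
  assumes "(\<Sum>i\<in>I. k i *\<^sub>R V i) = 0"
  shows "(\<Sum>i\<in>I. \<Sum>j\<in>I. k i * k j * (cross3 (V i) (V j) \<bullet> (W i - W j))) = 0"
proof -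
  define m where "m i = cross3 (W i) (V i)" for i
  have moment_split: "cross3 (V i) (V j) \<bullet> (W i - W j) = m i \<bullet> V j + m j \<bullet> V i" for i j
    unfolding m_def by (simp add: cross3_simps)
  have "(\<Sum>i\<in>I. \<Sum>j\<in>I. k i * k j * (m i \<bullet> V j)) = (\<Sum>i\<in>I. k i * (m i \<bullet> (\<Sum>j\<in>I. k j *\<^sub>R V j)))"
    by (simp add: inner_sum_right sum_distrib_left mult.assoc)
  then have half: "(\<Sum>i\<in>I. \<Sum>j\<in>I. k i * k j * (m i \<bullet> V j)) = 0"
    using assms by simp
  moreover have "(\<Sum>i\<in>I. \<Sum>j\<in>I. k i * k j * (m j \<bullet> V i)) = (\<Sum>i\<in>I. \<Sum>j\<in>I. k i * k j * (m i \<bullet> V j))"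
    by (subst sum.swap) (simp add: mult.commute)
  ultimately show ?thesis by (simp add: moment_split distrib_left sum.distrib)
qed

lemma skew_lines_cross_nonzero:
  assumes "is_dline L" and "\<not> coplanar_lines L L'"
  shows "cross3 (fst L) (fst L') \<noteq> 0"
proof
  assume parallel: "cross3 (fst L) (fst L') = 0"
  obtain v w v' w' where L: "L = (v, w)" and L': "L' = (v', w')" by (cases L, cases L')
  have "v \<bullet> v = 1" using assms(1) L by (simp add: is_dline_def dot_square_norm)
  moreover have "cross3 v (cross3 v v') = 0" using parallel L L' by simp
  ultimately have v': "v' = (v \<bullet> v') *\<^sub>R v" by (simp add: Lagrange)
  have "dim {v, w' - w} \<le> card {v, w' - w}" by (rule dim_le_card) (auto intro: span_base)
  also have "\<dots> < DIM(real^3)" by (simp add: card_insert_if)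
  finally obtain nv :: "real^3" where "nv \<noteq> 0" and orth: "\<And>y. y \<in> span {v, w' - w} \<Longrightarrow> orthogonal nv y"
    using orthogonal_to_subspace_exists by blast
  have "nv \<bullet> v = 0" and "nv \<bullet> (w' - w) = 0"
    using orth[of v] orth[of "w' - w"] by (simp_all add: span_base orthogonal_def)
  moreover from \<open>nv \<bullet> v = 0\<close> have "nv \<bullet> v' = 0" by (subst v') simp
  ultimately have "nv \<bullet> x = nv \<bullet> w" if "x \<in> line_points L \<union> line_points L'" for x
    using that unfolding L L' line_points_def
    by (auto simp: inner_add_right inner_diff_right algebra_simps)
  with \<open>nv \<noteq> 0\<close> have "coplanar_lines L L'" unfolding coplanar_lines_def by blast
  with assms(2) show False by simp
qed

lemma common_perpendicular:
  fixes v v' z :: "real^3"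
  assumes "cross3 v v' \<noteq> 0"
  obtains t t' where
    "z + t *\<^sub>R v - t' *\<^sub>R v' = ((cross3 v v' \<bullet> z) / (cross3 v v' \<bullet> cross3 v v')) *\<^sub>R cross3 v v'"
proof
  define n where "n = cross3 v v'"
  define t where "t = det3 v' z n / (n \<bullet> n)"
  define t' where "t' = det3 v z n / (n \<bullet> n)"
  have "n \<bullet> n > 0" using assms unfolding n_def by simp
  have "det3 v' z n *\<^sub>R v - det3 v z n *\<^sub>R v' + det3 v v' n *\<^sub>R z - det3 v v' z *\<^sub>R n = 0"
    by (rule det3_cramer_relation)
  moreover have "det3 v v' n = n \<bullet> n" and "det3 v v' z = n \<bullet> z" unfolding det3_def n_def by simp_all
  ultimately have "(n \<bullet> n) *\<^sub>R (z + t *\<^sub>R v - t' *\<^sub>R v') = (n \<bullet> z) *\<^sub>R n"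
    using \<open>n \<bullet> n > 0\<close> unfolding t_def t'_def by (simp add: algebra_simps)
  then have "inverse (n \<bullet> n) *\<^sub>R ((n \<bullet> n) *\<^sub>R (z + t *\<^sub>R v - t' *\<^sub>R v'))
      = inverse (n \<bullet> n) *\<^sub>R ((n \<bullet> z) *\<^sub>R n)" by simp
  then show "z + t *\<^sub>R v - t' *\<^sub>R v' = ((cross3 v v' \<bullet> z) / (cross3 v v' \<bullet> cross3 v v')) *\<^sub>R cross3 v v'"
    using \<open>n \<bullet> n > 0\<close> unfolding n_def by (simp add: divide_inverse_commute)
qed

lemma line_dist_skew:
  assumes "cross3 (fst L) (fst L') \<noteq> 0"
  shows "line_dist L L' =
    \<bar>cross3 (fst L) (fst L') \<bullet> (snd L - snd L')\<bar> / norm (cross3 (fst L) (fst L'))"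
proof -
  obtain v w v' w' where L: "L = (v, w)" and L': "L' = (v', w')" by (cases L, cases L')
  define n where "n = cross3 v v'"
  define z where "z = w - w'"
  have "norm n > 0" using assms unfolding L L' n_def by simp
  define M where "M = {norm (x - y) | x y. x \<in> line_points L \<and> y \<in> line_points L'}"
  have gap: "(w + t *\<^sub>R v) - (w' + t' *\<^sub>R v') = z + t *\<^sub>R v - t' *\<^sub>R v'" for t t'
    unfolding z_def by (simp add: algebra_simps)
  \<comment> \<open>every connecting segment has the same component along the common normal\<close>
  have "\<bar>n \<bullet> z\<bar> / norm n \<le> m" if "m \<in> M" for m
  proof -
    from that obtain t t' where "m = norm ((w + t *\<^sub>R v) - (w' + t' *\<^sub>R v'))"
      unfolding M_def line_points_def L L' by auto
    then have m: "m = norm (z + t *\<^sub>R v - t' *\<^sub>R v')" by (simp only: gap)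
    have "n \<bullet> (z + t *\<^sub>R v - t' *\<^sub>R v') = n \<bullet> z"
      unfolding n_def by (simp add: inner_add_right inner_diff_right dot_cross_self)
    then have "\<bar>n \<bullet> z\<bar> \<le> norm n * m" using Cauchy_Schwarz_ineq2 m by metis
    then show ?thesis using \<open>norm n > 0\<close> by (simp add: divide_le_eq mult.commute)
  qed
  moreover have "\<bar>n \<bullet> z\<bar> / norm n \<in> M"
  proof -
    obtain t t' where "z + t *\<^sub>R v - t' *\<^sub>R v' = ((n \<bullet> z) / (n \<bullet> n)) *\<^sub>R n"
      using common_perpendicular[of v v' z] assms unfolding L L' n_def by auto
    then have "norm ((w + t *\<^sub>R v) - (w' + t' *\<^sub>R v')) = \<bar>n \<bullet> z\<bar> / norm n"
      using \<open>norm n > 0\<close> by (simp add: gap dot_square_norm power2_eq_square)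
    moreover have "w + t *\<^sub>R v \<in> line_points L" and "w' + t' *\<^sub>R v' \<in> line_points L'"
      unfolding line_points_def L L' by auto
    ultimately show ?thesis unfolding M_def by (metis (mono_tags, lifting) mem_Collect_eq)
  qed
  ultimately have "Inf M = \<bar>n \<bullet> z\<bar> / norm n" by (intro cInf_eq_minimum)
  then show ?thesis unfolding line_dist_def M_def n_def z_def L L' by simp
qed

lemma unit_line_dist_moment:
  assumes "is_dline L" and "\<not> coplanar_lines L L'" and "line_dist L L' = 1"
  shows "cross3 (fst L) (fst L') \<bullet> (snd L - snd L') = chirality L L' * norm (cross3 (fst L) (fst L'))"
proof -
  have "cross3 (fst L) (fst L') \<noteq> 0" using assms(1,2) by (rule skew_lines_cross_nonzero)
  then have "\<bar>cross3 (fst L) (fst L') \<bullet> (snd L - snd L')\<bar> = norm (cross3 (fst L) (fst L'))"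
    using line_dist_skew assms(3) by (simp add: divide_eq_1_iff)
  then show ?thesis unfolding chirality_def by (metis sgn_mult_abs)
qed

section \<open>Monochromatic families\<close>

lemma one_of_five_products_pos:
  fixes abc abd abe acd ace ade bcd bce bde cde :: real
  assumes "abc \<noteq> 0" "abd \<noteq> 0" "abe \<noteq> 0" "acd \<noteq> 0" "ace \<noteq> 0" "ade \<noteq> 0"
    "bcd \<noteq> 0" "bce \<noteq> 0" "bde \<noteq> 0" "cde \<noteq> 0"
  shows "bcd * acd * abd * abc > 0 \<or> bce * ace * abe * abc > 0 \<or> bde * ade * abe * abd > 0 \<or>
    cde * ade * ace * acd > 0 \<or> cde * bde * bce * bcd > 0"
proof (rule ccontr)
  \<comment> \<open>each triple lies in exactly two of the five quadruples\<close>
  have "(bcd * acd * abd * abc) * (bce * ace * abe * abc) * (bde * ade * abe * abd) *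
      (cde * ade * ace * acd) * (cde * bde * bce * bcd) = (abc * abd * abe * acd * ace * ade * bcd * bce * bde * cde)\<^sup>2"
    by (simp add: power2_eq_square mult_ac)
  also have "\<dots> > 0" using assms by simp
  finally have pos: "(bcd * acd * abd * abc) * (bce * ace * abe * abc) * (bde * ade * abe * abd) *
      (cde * ade * ace * acd) * (cde * bde * bce * bcd) > 0" .
  assume "\<not> ?thesis"
  moreover have "bcd * acd * abd * abc \<noteq> 0" "bce * ace * abe * abc \<noteq> 0" "bde * ade * abe * abd \<noteq> 0"
    "cde * ade * ace * acd \<noteq> 0" "cde * bde * bce * bcd \<noteq> 0" using assms by simp_all
  ultimately have "bcd * acd * abd * abc < 0" "bce * ace * abe * abc < 0" "bde * ade * abe * abd < 0"
    "cde * ade * ace * acd < 0" "cde * bde * bce * bcd < 0" by linarith+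
  then have "(bcd * acd * abd * abc) * (bce * ace * abe * abc) * (bde * ade * abe * abd) *
      (cde * ade * ace * acd) * (cde * bde * bce * bcd) < 0"
    by (meson mult_neg_neg mult_pos_neg)
  with pos show False by simp
qed

text \<open>Directions \<open>V\<close> and base points \<open>W\<close> of pairwise skew lines at unit distance whose
  chirality graph on \<open>T\<close> is constantly \<open>s\<close>.\<close>

locale equichiral_family =
  fixes V W :: "'a::linorder \<Rightarrow> real^3" and T :: "'a set" and s :: real
  assumes cross_nonzero: "\<And>i j. i \<in> T \<Longrightarrow> j \<in> T \<Longrightarrow> i < j \<Longrightarrow> cross3 (V i) (V j) \<noteq> 0"
    and moment_eq: "\<And>i j. i \<in> T \<Longrightarrow> j \<in> T \<Longrightarrow> i < j \<Longrightarrow>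
      cross3 (V i) (V j) \<bullet> (W i - W j) = s * norm (cross3 (V i) (V j))"
    and sign_nonzero: "s \<noteq> 0"
begin

lemma cross_nonzero_neq: "i \<in> T \<Longrightarrow> j \<in> T \<Longrightarrow> i \<noteq> j \<Longrightarrow> cross3 (V i) (V j) \<noteq> 0"
  using cross_nonzero[of i j] cross_nonzero[of j i] by (metis cross_skew neg_equal_0_iff_equal neqE)

lemma moment_eq_all:
  assumes "i \<in> T" and "j \<in> T"
  shows "cross3 (V i) (V j) \<bullet> (W i - W j) = s * norm (cross3 (V i) (V j))"
proof (cases i j rule: linorder_cases)
  case greater
  have "cross3 (V i) (V j) \<bullet> (W i - W j) = cross3 (V j) (V i) \<bullet> (W j - W i)"
    by (subst cross_skew) (simp add: inner_diff_right)
  with greater assms show ?thesis using moment_eq[of j i] by (simp add: norm_cross_commute)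
qed (use assms moment_eq in auto)

lemma cross_form_eq_0:
  assumes "J \<subseteq> T" and "(\<Sum>i\<in>J. k i *\<^sub>R V i) = 0"
  shows "cross_form k V J = 0"
proof -
  have "s * cross_form k V J = (\<Sum>i\<in>J. \<Sum>j\<in>J. k i * k j * (cross3 (V i) (V j) \<bullet> (W i - W j)))"
    unfolding cross_form_def sum_distrib_left
    using assms(1) by (intro sum.cong refl) (simp add: moment_eq_all subset_iff)
  also have "\<dots> = 0" using assms(2) by (rule plucker_relation)
  finally show ?thesis using sign_nonzero by simp
qed

lemma det3_nonzero:
  assumes "a \<in> T" "b \<in> T" "c \<in> T" and "distinct [a, b, c]"
  shows "det3 (V a) (V b) (V c) \<noteq> 0"
proof
  assume flat: "det3 (V a) (V b) (V c) = 0"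
  define n where "n = cross3 (V a) (V b)"
  define k where "k = (\<lambda>_. 0)(a := det3 (V b) (V c) n, b := - det3 (V a) (V c) n, c := n \<bullet> n)"
  have "det3 (V a) (V b) n = n \<bullet> n" unfolding det3_def n_def ..
  with flat assms(4) have "(\<Sum>i\<in>{a, b, c}. k i *\<^sub>R V i) = det3 (V b) (V c) n *\<^sub>R V a
      - det3 (V a) (V c) n *\<^sub>R V b + det3 (V a) (V b) n *\<^sub>R V c - det3 (V a) (V b) (V c) *\<^sub>R n"
    by (simp add: k_def)
  also have "\<dots> = 0" by (rule det3_cramer_relation)
  finally have dep: "(\<Sum>i\<in>{a, b, c}. k i *\<^sub>R V i) = 0" .
  then have "cross_form k V {a, b, c} = 0" using assms(1-3) by (intro cross_form_eq_0) auto
  moreover have "n \<noteq> 0" using cross_nonzero_neq assms unfolding n_def by auto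
  with assms have "cross_form k V {a, b, c} \<noteq> 0"
    by (intro cross_form_three_nonzero[OF assms(4) dep]) (simp_all add: k_def cross_nonzero_neq)
  ultimately show False by simp
qed

lemma det3_product_nonpos:
  assumes "a \<in> T" "b \<in> T" "c \<in> T" "d \<in> T" and "distinct [a, b, c, d]"
  shows "det3 (V b) (V c) (V d) * det3 (V a) (V c) (V d) * det3 (V a) (V b) (V d) * det3 (V a) (V b) (V c) \<le> 0"
proof (rule ccontr)
  assume pos: "\<not> ?thesis"
  define k where "k = (\<lambda>_. 0)(a := det3 (V b) (V c) (V d), b := - det3 (V a) (V c) (V d),
    c := det3 (V a) (V b) (V d), d := - det3 (V a) (V b) (V c))"
  from assms(5) have "(\<Sum>i\<in>{a, b, c, d}. k i *\<^sub>R V i) = det3 (V b) (V c) (V d) *\<^sub>R V a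
      - det3 (V a) (V c) (V d) *\<^sub>R V b + det3 (V a) (V b) (V d) *\<^sub>R V c - det3 (V a) (V b) (V c) *\<^sub>R V d"
    by (simp add: k_def)
  also have "\<dots> = 0" by (rule det3_cramer_relation)
  finally have dep: "(\<Sum>i\<in>{a, b, c, d}. k i *\<^sub>R V i) = 0" .
  then have "cross_form k V {a, b, c, d} = 0" using assms(1-4) by (intro cross_form_eq_0) auto
  moreover have "k a * k b * k c * k d > 0" using pos assms(5) by (simp add: k_def)
  with assms have "cross_form k V {a, b, c, d} \<noteq> 0"
    by (intro cross_form_four_nonzero[OF assms(5) dep]) (auto simp: cross_nonzero_neq)
  ultimately show False by simp
qed

lemma card_le_4: "card T \<le> 4"
proof (rule ccontr)
  assume "\<not> card T \<le> 4"
  then have "finite T" and "5 \<le> card T" using card.infinite by fastforce+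
  then obtain S where "S \<subseteq> T" and "card S = 5" using obtain_subset_with_card_n by metis
  then obtain xs where xs: "set xs = S" "distinct xs" "length xs = 5"
    using finite_distinct_list card.infinite distinct_card by (metis zero_neq_numeral)
  then obtain a b c d e where "xs = [a, b, c, d, e]" by (auto simp: length_Suc_conv numeral_eq_Suc)
  with xs \<open>S \<subseteq> T\<close> have in_T: "a \<in> T" "b \<in> T" "c \<in> T" "d \<in> T" "e \<in> T"
    and dist: "distinct [a, b, c, d, e]" by auto
  let ?D = "\<lambda>x y z. det3 (V x) (V y) (V z)"
  have "?D b c d * ?D a c d * ?D a b d * ?D a b c > 0 \<or> ?D b c e * ?D a c e * ?D a b e * ?D a b c > 0 \<or>
      ?D b d e * ?D a d e * ?D a b e * ?D a b d > 0 \<or> ?D c d e * ?D a d e * ?D a c e * ?D a c d > 0 \<or>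
      ?D c d e * ?D b d e * ?D b c e * ?D b c d > 0"
    by (rule one_of_five_products_pos) (use in_T dist in \<open>simp_all add: det3_nonzero\<close>)
  moreover have "?D b c d * ?D a c d * ?D a b d * ?D a b c \<le> 0" "?D b c e * ?D a c e * ?D a b e * ?D a b c \<le> 0"
      "?D b d e * ?D a d e * ?D a b e * ?D a b d \<le> 0" "?D c d e * ?D a d e * ?D a c e * ?D a c d \<le> 0"
      "?D c d e * ?D b d e * ?D b c e * ?D b c d \<le> 0"
    using in_T dist by (simp_all add: det3_product_nonpos)
  ultimately show False by linarith
qed

end

theorem theorem2:
  fixes n :: nat and L :: "nat \<Rightarrow> dline"
  assumes dl: "\<And>i. i \<in> {1..n} \<Longrightarrow> is_dline (L i)"
    and skew: "\<And>i j. i \<in> {1..n} \<Longrightarrow> j \<in> {1..n} \<Longrightarrow> i \<noteq> j \<Longrightarrow> \<not> coplanar_lines (L i) (L j)"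
    and dist1: "\<And>i j. 1 \<le> i \<Longrightarrow> i < j \<Longrightarrow> j \<le> n \<Longrightarrow> line_dist (L i) (L j) = 1"
  shows "\<not> (\<exists>S \<subseteq> {1..n}. card S = 5 \<and> (\<exists>s \<in> {-1, 1}.
            \<forall>i \<in> S. \<forall>j \<in> S. i < j \<longrightarrow> chirality (L i) (L j) = s))"
proof
  assume "\<exists>S \<subseteq> {1..n}. card S = 5 \<and> (\<exists>s \<in> {-1, 1}.
            \<forall>i \<in> S. \<forall>j \<in> S. i < j \<longrightarrow> chirality (L i) (L j) = s)"
  then obtain S s where S: "S \<subseteq> {1..n}" "card S = 5" and "s \<in> {-1, 1}"
    and mono: "\<And>i j. i \<in> S \<Longrightarrow> j \<in> S \<Longrightarrow> i < j \<Longrightarrow> chirality (L i) (L j) = s" by blast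
  have pair: "cross3 (fst (L i)) (fst (L j)) \<noteq> 0 \<and>
      cross3 (fst (L i)) (fst (L j)) \<bullet> (snd (L i) - snd (L j)) = s * norm (cross3 (fst (L i)) (fst (L j)))"
    if "i \<in> S" "j \<in> S" "i < j" for i j
  proof -
    have "i \<in> {1..n}" "j \<in> {1..n}" using that S by auto
    then have "is_dline (L i)" and "\<not> coplanar_lines (L i) (L j)" and "line_dist (L i) (L j) = 1"
      using dl skew dist1 \<open>i < j\<close> by auto
    then show ?thesis using mono[OF that] skew_lines_cross_nonzero unit_line_dist_moment by simp
  qed
  have "equichiral_family (\<lambda>i. fst (L i)) (\<lambda>i. snd (L i)) S s"
    using pair \<open>s \<in> {-1, 1}\<close> by unfold_locales auto
  then show False using equichiral_family.card_le_4 S(2) by fastforce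
qed

end
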